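(* Under the standing assumptions below, if $\mathcal P_1,\mathcal P_2$ are finite partitions of $\lambda$ with $\mathcal P_1\prec\mathcal P_2$, then $I(\mathcal P_1)\subseteq I(\mathcal P_2)$.
   Context: Standing assumptions: $G$ is a finite graph with at least one edge which is trivially power-colorable (for every positive integer $n$, every $\chi(G)$-coloring of $G^n$ is of the form $v\mapsto\phi(v_i)$ for some coordinate $i$ and proper coloring $\phi$ of $G$), $k=\chi(G)$, $\lambda$ is an infinite cardinal, and $\Phi$ is a fixed proper $k$-coloring of $G^\lambda$ (vertex set $V(G)^\lambda$, $(v_\xi)$ adjacent to $(w_\xi)$ iff $v_\xi w_\xi\in E(G)$ for all $\xi<\lambda$). A finite partition of $\lambda$ is a partition of $\lambda$ into finitely many nonempty pieces. For a finite partition $\mathcal P$, $V_{\mathcal P}=\{\mathbf v\in V(G^\lambda): \mathbf v\restriction A \text{ is constant for each } A\in\mathcal P\}$, and for $\mathbf v\in V_{\mathcal P}$, $A\in\mathcal P$, $\mathbf v_A\in V(G)$ is the constant value of $\mathbf v$ on $A$. If $\mathcal P=\{A_1,\dots,A_n\}$, the induced subgraph on $V_{\mathcal P}$ is isomorphic to $G^n$ via $\mathbf v\mapsto(\mathbf v_{A_1},\dots,\mathbf v_{A_n})$, so there are $i$ and a proper coloring $\phi$ of $G$ with $\Phi(\mathbf v)=\phi(\mathbf v_{A_i})$ for all $\mathbf v\in V_{\mathcal P}$; since $G$ has an edge, the block $A_i$ is uniquely determined, and it is denoted $I(\mathcal P)$. $\mathcal P_1\prec\mathcal P_2$ ($\mathcal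 P_1$ refines $\mathcal P_2$) means every $A\in\mathcal P_1$ is contained in some $B\in\mathcal P_2$. *)

theory Defs
  imports Main "HOL-Library.FuncSet" "HOL-Library.Disjoint_Sets"
begin

definition fin_graph :: "'v set \<Rightarrow> ('v \<Rightarrow> 'v \<Rightarrow> bool) \<Rightarrow> bool" where
  "fin_graph V E \<longleftrightarrow> finite V \<and> (\<forall>u v. E u v \<longrightarrow> u \<in> V \<and> v \<in> V)
     \<and> (\<forall>u v. E u v \<longrightarrow> E v u) \<and> (\<forall>u. \<not> E u u)"

definition proper_col :: "'v set \<Rightarrow> ('v \<Rightarrow> 'v \<Rightarrow> bool) \<Rightarrow> ('v \<Rightarrow> nat) \<Rightarrow> bool" where
  "proper_col V E c \<longleftrightarrow> (\<forall>u\<in>V. \<forall>v\<in>V. E u v \<longrightarrow> c u \<noteq> c v)"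

definition k_col :: "'v set \<Rightarrow> ('v \<Rightarrow> 'v \<Rightarrow> bool) \<Rightarrow> nat \<Rightarrow> ('v \<Rightarrow> nat) \<Rightarrow> bool" where
  "k_col V E k c \<longleftrightarrow> proper_col V E c \<and> c ` V \<subseteq> {..<k}"

definition chrom :: "'v set \<Rightarrow> ('v \<Rightarrow> 'v \<Rightarrow> bool) \<Rightarrow> nat" where
  "chrom V E = (LEAST k. \<exists>c. k_col V E k c)"

definition powV :: "'v set \<Rightarrow> nat \<Rightarrow> 'v list set" where
  "powV V n = {xs. length xs = n \<and> set xs \<subseteq> V}"

definition powE :: "('v \<Rightarrow> 'v \<Rightarrow> bool) \<Rightarrow> 'v list \<Rightarrow> 'v list \<Rightarrow> bool" where
  "powE E xs ys \<longleftrightarrow> length xs = length ys \<and> (\<forall>i<length xs. E (xs ! i) (ys ! i))"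

definition triv_pow_colorable :: "'v set \<Rightarrow> ('v \<Rightarrow> 'v \<Rightarrow> bool) \<Rightarrow> bool" where
  "triv_pow_colorable V E \<longleftrightarrow>
     (\<forall>n>0. \<forall>c. k_col (powV V n) (powE E) (chrom V E) c \<longrightarrow>
        (\<exists>i<n. \<exists>\<phi>. proper_col V E \<phi> \<and> (\<forall>xs\<in>powV V n. c xs = \<phi> (xs ! i))))"

definition ipowV :: "'i set \<Rightarrow> 'v set \<Rightarrow> ('i \<Rightarrow> 'v) set" where
  "ipowV L V = (L \<rightarrow>\<^sub>E V)"

definition ipowE :: "'i set \<Rightarrow> ('v \<Rightarrow> 'v \<Rightarrow> bool) \<Rightarrow> ('i \<Rightarrow> 'v) \<Rightarrow> ('i \<Rightarrow> 'v) \<Rightarrow> bool" where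
  "ipowE L E x y \<longleftrightarrow> (\<forall>\<xi>\<in>L. E (x \<xi>) (y \<xi>))"

definition fin_partition :: "'i set \<Rightarrow> 'i set set \<Rightarrow> bool" where
  "fin_partition L P \<longleftrightarrow> finite P \<and> partition_on L P"

definition refines :: "'i set set \<Rightarrow> 'i set set \<Rightarrow> bool" where
  "refines P1 P2 \<longleftrightarrow> (\<forall>A\<in>P1. \<exists>B\<in>P2. A \<subseteq> B)"

definition VP :: "'i set \<Rightarrow> 'v set \<Rightarrow> 'i set set \<Rightarrow> ('i \<Rightarrow> 'v) set" where
  "VP L V P = {x \<in> ipowV L V. \<forall>A\<in>P. \<exists>a. \<forall>\<xi>\<in>A. x \<xi> = a}"

definition Iblock :: "'i set \<Rightarrow> 'v set \<Rightarrow> ('v \<Rightarrow> 'v \<Rightarrow> bool) \<Rightarrow> (('i \<Rightarrow> 'v) \<Rightarrow> nat) \<Rightarrow> 'i set set \<Rightarrow> 'i set" where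
  "Iblock L V E \<Phi> P = (THE A. A \<in> P \<and> (\<exists>\<phi>. proper_col V E \<phi> \<and>
      (\<forall>x\<in>VP L V P. \<forall>\<xi>\<in>A. \<Phi> x = \<phi> (x \<xi>))))"

end

theory Submission
  imports Defs
begin

text \<open>
  Let \<open>A = I(P\<^sub>1)\<close>, so that \<open>\<Phi>(v) = \<phi>(v\<^sub>A)\<close> on \<open>V\<^sub>P\<^sub>1\<close>, and let \<open>B \<in> P\<^sub>2\<close> contain \<open>A\<close>.
  Since \<open>P\<^sub>1\<close> refines \<open>P\<^sub>2\<close>, \<open>V\<^sub>P\<^sub>2 \<subseteq> V\<^sub>P\<^sub>1\<close>, and a vertex of \<open>V\<^sub>P\<^sub>2\<close> is constant on \<open>B \<supseteq> A\<close>;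
  hence \<open>\<Phi>(v) = \<phi>(v\<^sub>B)\<close> on \<open>V\<^sub>P\<^sub>2\<close>, and \<open>B = I(P\<^sub>2)\<close> by uniqueness of the determining block.
  Existence of \<open>I(P)\<close> comes from trivial power-colourability via \<open>V\<^sub>P \<cong> G\<^sup>n\<close>; uniqueness
  holds because two different blocks can be given independent values.
\<close>

definition determines_colour ::
    "'i set \<Rightarrow> 'v set \<Rightarrow> ('v \<Rightarrow> 'v \<Rightarrow> bool) \<Rightarrow> (('i \<Rightarrow> 'v) \<Rightarrow> nat) \<Rightarrow> 'i set set \<Rightarrow> 'i set \<Rightarrow> bool"
  where "determines_colour L V E \<Phi> P A \<longleftrightarrow>
    (\<exists>\<phi>. proper_col V E \<phi> \<and> (\<forall>x\<in>VP L V P. \<forall>\<xi>\<in>A. \<Phi> x = \<phi> (x \<xi>)))"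

lemma Iblock_def':
  "Iblock L V E \<Phi> P = (THE A. A \<in> P \<and> determines_colour L V E \<Phi> P A)"
  by (simp add: Iblock_def determines_colour_def)

lemma VP_mono:
  assumes "refines P1 P2"
  shows "VP L V P2 \<subseteq> VP L V P1"
  using assms by (force simp: VP_def refines_def)

lemma determines_colour_unique:
  assumes "fin_graph V E" "E u v" "partition_on L P"
    and A: "A \<in> P" "determines_colour L V E \<Phi> P A"
    and A': "A' \<in> P" "determines_colour L V E \<Phi> P A'"
  shows "A = A'"
proof (rule ccontr)
  assume ne: "A \<noteq> A'"
  have uv: "u \<in> V" "v \<in> V" using assms(1,2) by (auto simp: fin_graph_def)
  have disj: "A \<inter> A' = {}" and sub: "A \<subseteq> L" "A' \<subseteq> L"
    using assms(3) A(1) A'(1) ne by (auto simp: partition_on_def pairwise_def disjnt_def)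
  obtain \<xi> \<xi>' where \<xi>: "\<xi> \<in> A" "\<xi>' \<in> A'"
    using partition_onD3[OF assms(3)] A(1) A'(1) by (metis ex_in_conv)
  obtain \<phi> \<phi>' where \<phi>: "\<forall>x\<in>VP L V P. \<forall>\<xi>\<in>A. \<Phi> x = \<phi> (x \<xi>)"
    and \<phi>': "proper_col V E \<phi>'" "\<forall>x\<in>VP L V P. \<forall>\<xi>\<in>A'. \<Phi> x = \<phi>' (x \<xi>)"
    using A(2) A'(2) by (auto simp: determines_colour_def)
  \<comment> \<open>put \<open>u\<close> on \<open>A\<close> and an arbitrary \<open>w\<close> elsewhere: \<open>\<phi>'\<close> must then be constant\<close>
  have "\<phi>' w = \<phi> u" if w: "w \<in> V" for w
  proof -
    define x where "x = (\<lambda>\<zeta>\<in>L. if \<zeta> \<in> A then u else w)"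
    have "x \<in> VP L V P"
    proof -
      have "\<exists>a. \<forall>\<zeta>\<in>C. x \<zeta> = a" if C: "C \<in> P" for C
      proof (cases "C = A")
        case False
        then have "C \<inter> A = {}" "C \<subseteq> L"
          using assms(3) A(1) C by (auto simp: partition_on_def pairwise_def disjnt_def)
        then show ?thesis by (auto simp: x_def)
      qed (use sub in \<open>auto simp: x_def\<close>)
      then show ?thesis using uv w by (auto simp: VP_def ipowV_def x_def)
    qed
    moreover have "x \<xi> = u" "x \<xi>' = w" using \<xi> disj sub by (auto simp: x_def)
    ultimately show ?thesis using \<phi> \<phi>'(2) \<xi> by force
  qed
  moreover have "\<phi>' u \<noteq> \<phi>' v" using \<phi>'(1) uv assms(2) by (auto simp: proper_col_def)
  ultimately show False using uv by simp
qed

lemma Iblock_eqI: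
  assumes "fin_graph V E" "\<exists>u v. E u v" "partition_on L P"
    and "A \<in> P" "determines_colour L V E \<Phi> P A"
  shows "Iblock L V E \<Phi> P = A"
  unfolding Iblock_def'
  using assms determines_colour_unique[OF assms(1) _ assms(3)] by (intro the_equality) blast+

text \<open>With \<open>blk \<zeta>\<close> the index of a block containing \<open>\<zeta>\<close>, this realises the isomorphism
  \<open>G\<^sup>n \<cong> V\<^sub>P\<close> of the paper.\<close>

definition lift_tuple :: "'i set \<Rightarrow> ('i \<Rightarrow> nat) \<Rightarrow> 'v list \<Rightarrow> 'i \<Rightarrow> 'v" where
  "lift_tuple L blk xs = (\<lambda>\<zeta>\<in>L. xs ! blk \<zeta>)"

lemma lift_tuple_in_ipowV:
  assumes "\<forall>\<zeta>\<in>L. blk \<zeta> < n" "xs \<in> powV V n"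
  shows "lift_tuple L blk xs \<in> ipowV L V"
  using assms by (auto simp: lift_tuple_def ipowV_def powV_def)

lemma ipowE_lift_tuple:
  assumes "\<forall>\<zeta>\<in>L. blk \<zeta> < n" "xs \<in> powV V n" "powE E xs ys"
  shows "ipowE L E (lift_tuple L blk xs) (lift_tuple L blk ys)"
  using assms by (auto simp: lift_tuple_def ipowE_def powE_def powV_def)

lemma k_col_lift_tuple:
  assumes "k_col (ipowV L V) (ipowE L E) k \<Phi>" "\<forall>\<zeta>\<in>L. blk \<zeta> < n"
  shows "k_col (powV V n) (powE E) k (\<Phi> \<circ> lift_tuple L blk)"
  using assms(1) lift_tuple_in_ipowV[OF assms(2)] ipowE_lift_tuple[OF assms(2)]
  unfolding k_col_def proper_col_def by (simp add: image_subset_iff) blast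

lemma VP_eq_lift_tuple:
  assumes "partition_on L P" "set ps \<subseteq> P"
    and blk: "\<forall>\<zeta>\<in>L. blk \<zeta> < length ps \<and> \<zeta> \<in> ps ! blk \<zeta>"
    and x: "x \<in> VP L V P"
  obtains xs where "xs \<in> powV V (length ps)" "x = lift_tuple L blk xs"
    "\<forall>j<length ps. \<forall>\<zeta>\<in>ps ! j. xs ! j = x \<zeta>"
proof
  let ?rep = "\<lambda>j. SOME \<zeta>. \<zeta> \<in> ps ! j"
  define xs where "xs = map (\<lambda>j. x (?rep j)) [0..<length ps]"
  have block: "ps ! j \<in> P" if "j < length ps" for j using assms(2) that by auto
  have rep: "?rep j \<in> ps ! j" "ps ! j \<subseteq> L" if "j < length ps" for j
    using assms(1) block[OF that] by (auto simp: partition_on_def some_in_eq)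
  have xV: "x \<in> L \<rightarrow>\<^sub>E V" using x by (simp add: VP_def ipowV_def)
  show entries: "\<forall>j<length ps. \<forall>\<zeta>\<in>ps ! j. xs ! j = x \<zeta>"
  proof (intro allI impI ballI)
    fix j \<zeta> assume j: "j < length ps" and \<zeta>: "\<zeta> \<in> ps ! j"
    obtain a where "\<forall>\<zeta>\<in>ps ! j. x \<zeta> = a" using x block[OF j] by (auto simp: VP_def)
    then show "xs ! j = x \<zeta>" using j \<zeta> rep(1)[OF j] by (simp add: xs_def)
  qed
  show "xs \<in> powV V (length ps)" using rep xV by (fastforce simp: xs_def powV_def)
  show "x = lift_tuple L blk xs"
    using entries blk xV by (intro ext) (auto simp: lift_tuple_def)
qed

lemma determines_colour_exists:
  assumes tp: "triv_pow_colorable V E"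
    and \<Phi>: "k_col (ipowV L V) (ipowE L E) (chrom V E) \<Phi>"
    and P: "fin_partition L P" and "L \<noteq> {}"
  shows "\<exists>A\<in>P. determines_colour L V E \<Phi> P A"
proof -
  have part: "partition_on L P" using P by (simp add: fin_partition_def)
  obtain ps where ps: "set ps = P" using P finite_list by (auto simp: fin_partition_def)
  define blk where "blk \<zeta> = (SOME j. j < length ps \<and> \<zeta> \<in> ps ! j)" for \<zeta>
  have blk: "\<forall>\<zeta>\<in>L. blk \<zeta> < length ps \<and> \<zeta> \<in> ps ! blk \<zeta>"
  proof
    fix \<zeta> assume "\<zeta> \<in> L"
    then have "\<exists>j. j < length ps \<and> \<zeta> \<in> ps ! j"
      using part ps by (auto simp: partition_on_def in_set_conv_nth)
    then show "blk \<zeta> < length ps \<and> \<zeta> \<in> ps ! blk \<zeta>" unfolding blk_def by (rule someI_ex)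
  qed
  have "length ps > 0" using part ps \<open>L \<noteq> {}\<close> by (auto simp: partition_on_def)
  moreover have "k_col (powV V (length ps)) (powE E) (chrom V E) (\<Phi> \<circ> lift_tuple L blk)"
    using k_col_lift_tuple[OF \<Phi>] blk by blast
  ultimately obtain i \<phi> where i: "i < length ps" "proper_col V E \<phi>"
    and \<phi>: "\<forall>xs\<in>powV V (length ps). \<Phi> (lift_tuple L blk xs) = \<phi> (xs ! i)"
    using tp unfolding triv_pow_colorable_def comp_def by blast
  have "\<Phi> x = \<phi> (x \<xi>)" if x: "x \<in> VP L V P" and \<xi>: "\<xi> \<in> ps ! i" for x \<xi>
  proof -
    obtain xs where "xs \<in> powV V (length ps)" "x = lift_tuple L blk xs" "xs ! i = x \<xi>"
      using VP_eq_lift_tuple[OF part _ blk x] ps i(1) \<xi> by blast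
    then show ?thesis using \<phi> by simp
  qed
  then have "determines_colour L V E \<Phi> P (ps ! i)"
    using i(2) by (auto simp: determines_colour_def)
  then show ?thesis using i(1) ps by auto
qed

lemma determines_colour_coarsen:
  assumes "refines P1 P2" "A \<noteq> {}" "A \<subseteq> B" "B \<in> P2"
    and "determines_colour L V E \<Phi> P1 A"
  shows "determines_colour L V E \<Phi> P2 B"
proof -
  obtain \<xi>\<^sub>0 where \<xi>\<^sub>0: "\<xi>\<^sub>0 \<in> A" using assms(2) by auto
  obtain \<phi> where \<phi>: "proper_col V E \<phi>" "\<forall>x\<in>VP L V P1. \<forall>\<xi>\<in>A. \<Phi> x = \<phi> (x \<xi>)"
    using assms(5) by (auto simp: determines_colour_def)
  have "\<Phi> x = \<phi> (x \<xi>)" if x: "x \<in> VP L V P2" and \<xi>: "\<xi> \<in> B" for x \<xi>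
  proof -
    have "\<Phi> x = \<phi> (x \<xi>\<^sub>0)" using \<phi>(2) VP_mono[OF assms(1)] x \<xi>\<^sub>0 by blast
    moreover obtain a where "\<forall>\<zeta>\<in>B. x \<zeta> = a" using x assms(4) by (auto simp: VP_def)
    ultimately show ?thesis using \<xi> \<xi>\<^sub>0 assms(3) by auto
  qed
  then show ?thesis using \<phi>(1) by (auto simp: determines_colour_def)
qed

theorem mainTheorem16:
  fixes V :: "'v set" and E :: "'v \<Rightarrow> 'v \<Rightarrow> bool" and L :: "'i set"
    and \<Phi> :: "('i \<Rightarrow> 'v) \<Rightarrow> nat" and P1 P2 :: "'i set set"
  assumes "fin_graph V E"
    and "\<exists>u v. E u v"
    and "triv_pow_colorable V E"
    and "infinite L"
    and "k_col (ipowV L V) (ipowE L E) (chrom V E) \<Phi>"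
    and "fin_partition L P1" and "fin_partition L P2"
    and "refines P1 P2"
  shows "Iblock L V E \<Phi> P1 \<subseteq> Iblock L V E \<Phi> P2"
proof -
  have P1: "partition_on L P1" and P2: "partition_on L P2"
    using assms(6,7) by (auto simp: fin_partition_def)
  have "L \<noteq> {}" using assms(4) by auto
  then obtain A where A: "A \<in> P1" "determines_colour L V E \<Phi> P1 A"
    using determines_colour_exists[OF assms(3,5,6)] by blast
  obtain B where B: "B \<in> P2" "A \<subseteq> B" using assms(8) A(1) by (auto simp: refines_def)
  have "A \<noteq> {}" using P1 A(1) by (auto simp: partition_on_def)
  then have "determines_colour L V E \<Phi> P2 B"
    using determines_colour_coarsen[OF assms(8) _ B(2,1) A(2)] by blast
  then have "Iblock L V E \<Phi> P2 = B" using Iblock_eqI[OF assms(1,2) P2 B(1)] by blast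
  moreover have "Iblock L V E \<Phi> P1 = A" using Iblock_eqI[OF assms(1,2) P1 A] .
  ultimately show ?thesis using B(2) by simp
qed

end
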